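(* In the setting of the Saint-Venant–Exner fluctuations below, assume additionally that $q_b(h,0)=0$, $h_b(h,0)=0$, and $\partial q_b/\partial h(h,0)=\partial q_b/\partial(hv)(h,0)=0$ for all $h>0$. Let $\mathbf{u}_L,\mathbf{u}_R$ be two lake-at-rest states, i.e. $(hv)_L=(hv)_R=0$ and $h_L+b_L=h_R+b_R$, with $h_L,h_R>0$. Let $\tilde{\mathbf{u}}=\big(\{\!\{h\}\!\},\;\frac{\sqrt{h_L}v_L+\sqrt{h_R}v_R}{\sqrt{h_L}+\sqrt{h_R}},\;\{\!\{b\}\!\}\big)$ (here the middle entry is the averaged velocity, so the momentum of $\tilde{\mathbf{u}}$ is $\{\!\{h\}\!\}$ times it), $\mathbf{A}_{roe}=\mathbf{A}(\tilde{\mathbf{u}})$, and $\mathbf{Q}_{roe}=\frac12\mathbf{R}|\boldsymbol{\Lambda}|\mathbf{R}^{-1}$ where $\mathbf{A}_{roe}=\mathbf{R}\boldsymbol{\Lambda}\mathbf{R}^{-1}$ is an eigendecomposition and $|\boldsymbol{\Lambda}|=\mathrm{diag}(|\lambda_1|,|\lambda_2|,|\lambda_3|)$. Then $\mathbf{A}_{roe}$ is diagonalizable with real eigenvalues, $\mathbf{D}^\pm(\mathbf{u}_L,\mathbf{u}_R)=0$, and $\mathbf{Q}_{roe}(\mathbf{u}_R-\mathbf{u}_L)=0$; in particular $[\![\mathbf{w}]\!]^T\mathbf{Q}_{roe}[\![\mathbf{u}]\!]=0$ and, for any $\alpha\in[0,1]$, the fluctuations $\mathbf{D}^\pm\pm(\alpha\mathbf{Q}_{llf}+(1-\alpha)\mathbf{Q}_{roe})[\![\mathbf{u}]\!]$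 with $\alpha=0$ vanish.
   Context: Saint-Venant–Exner setting: state $\mathbf{u}=(h,hv,b)^T$, $h>0$, $v=hv/h$, constants $g>0$, $r>0$, $C^1$ sediment discharge $q_b=q_b(h,hv)$ and $h_b=h_b(h,hv)$ with $q_b=v\,h_b$. $\mathbf{f}(\mathbf{u})=(hv,hv^2,q_b)^T$; $\mathbf{B}(\mathbf{u})$ is the $3\times3$ matrix whose only nonzero row is the second, equal to $(g(h+h_b),\,0,\,g(h+\tfrac1r h_b))$; generalized Jacobian $\mathbf{A}=\mathbf{f}_{\mathbf{u}}+\mathbf{B}=\begin{pmatrix}0&1&0\\ g(h+h_b)-v^2&2v&g(h+\frac1r h_b)\\ \partial q_b/\partial h&\partial q_b/\partial(hv)&0\end{pmatrix}$; auxiliary variables $\mathbf{z}(\mathbf{u})=(h,h_b,b)^T$; entropy variables $\mathbf{w}=(r(g(h+b)-\tfrac{v^2}{2}),\,rv,\,g(rh+b))^T$. Notation $[\![a]\!]=a_R-a_L$, $\{\!\{a\}\!\}=\tfrac12(a_L+a_R)$. The EC fluctuations are $\mathbf{D}^-(\mathbf{u}_L,\mathbf{u}_R)=\tfrac12\mathbf{B}(\mathbf{u}_L)[\![\mathbf{z}]\!]+\mathbf{f}^*-\mathbf{f}(\mathbf{u}_L)$ and $\mathbf{D}^+(\mathbf{u}_L,\mathbf{u}_R)=\tfrac12\mathbf{B}(\mathbf{u}_R)[\![\mathbf{z}]\!]+\mathbf{f}(\mathbf{u}_R)-\mathbf{f}^*$ with $\mathbf{f}^*=(\{\!\{hv\}\!\},\{\!\{hv\}\!\}\{\!\{v\}\!\},\{\!\{q_b\}\!\})^T$.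 $\mathbf{Q}_{llf}=\frac12\lambda_{\max}\mathbf{I}$ with a scalar $\lambda_{\max}\ge0$. *)

theory Defs
  imports "HOL-Analysis.Analysis"
begin

text \<open>Saint-Venant--Exner setting. A state is u = (h, hv, b) in real^3;
  components u$1 = h, u$2 = hv (momentum), u$3 = b. The sediment functions
  qb, hb are functions of (h, hv).\<close>

definition avg :: "real \<Rightarrow> real \<Rightarrow> real" where
  "avg a c = (a + c) / 2"

definition vel :: "real^3 \<Rightarrow> real" where
  "vel u = u$2 / u$1"

definition C1_state :: "(real \<Rightarrow> real \<Rightarrow> real) \<Rightarrow> bool" where
  "C1_state F \<longleftrightarrow>
     (\<exists>F'. (\<forall>p \<in> {0<..} \<times> UNIV.
              ((\<lambda>q. F (fst q) (snd q)) has_derivative blinfun_apply (F' p)) (at p))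
          \<and> continuous_on ({0<..} \<times> UNIV) F')"

definition dh :: "(real \<Rightarrow> real \<Rightarrow> real) \<Rightarrow> real \<Rightarrow> real \<Rightarrow> real" where
  "dh F h m = deriv (\<lambda>x. F x m) h"

definition dm :: "(real \<Rightarrow> real \<Rightarrow> real) \<Rightarrow> real \<Rightarrow> real \<Rightarrow> real" where
  "dm F h m = deriv (\<lambda>y. F h y) m"

definition flux :: "(real \<Rightarrow> real \<Rightarrow> real) \<Rightarrow> real^3 \<Rightarrow> real^3" where
  "flux qb u = vector [u$2, u$2 * vel u, qb (u$1) (u$2)]"

definition Bmat :: "real \<Rightarrow> real \<Rightarrow> (real \<Rightarrow> real \<Rightarrow> real) \<Rightarrow> real^3 \<Rightarrow> real^3^3" where
  "Bmat g r hb u = (\<chi> i j. if i = 2 then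
       (if j = 1 then g * (u$1 + hb (u$1) (u$2))
        else if j = 3 then g * (u$1 + (1/r) * hb (u$1) (u$2)) else 0)
     else 0)"

text \<open>Generalized Jacobian A = f_u + B.\<close>
definition Amat :: "real \<Rightarrow> real \<Rightarrow> (real \<Rightarrow> real \<Rightarrow> real) \<Rightarrow> (real \<Rightarrow> real \<Rightarrow> real)
    \<Rightarrow> real^3 \<Rightarrow> real^3^3" where
  "Amat g r qb hb u = (let h = u$1; m = u$2; v = vel u in
     vector [vector [0, 1, 0],
             vector [g * (h + hb h m) - v^2, 2 * v, g * (h + (1/r) * hb h m)],
             vector [dh qb h m, dm qb h m, 0]])"

definition zaux :: "(real \<Rightarrow> real \<Rightarrow> real) \<Rightarrow> real^3 \<Rightarrow> real^3" where
  "zaux hb u = vector [u$1, hb (u$1) (u$2), u$3]"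

definition wvar :: "real \<Rightarrow> real \<Rightarrow> real^3 \<Rightarrow> real^3" where
  "wvar g r u = vector [r * (g * (u$1 + u$3) - (vel u)^2 / 2), r * vel u, g * (r * u$1 + u$3)]"

definition fstar :: "(real \<Rightarrow> real \<Rightarrow> real) \<Rightarrow> real^3 \<Rightarrow> real^3 \<Rightarrow> real^3" where
  "fstar qb uL uR = vector [avg (uL$2) (uR$2), avg (uL$2) (uR$2) * avg (vel uL) (vel uR),
                            avg (qb (uL$1) (uL$2)) (qb (uR$1) (uR$2))]"

definition Dminus :: "real \<Rightarrow> real \<Rightarrow> (real \<Rightarrow> real \<Rightarrow> real) \<Rightarrow> (real \<Rightarrow> real \<Rightarrow> real)
    \<Rightarrow> real^3 \<Rightarrow> real^3 \<Rightarrow> real^3" where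
  "Dminus g r qb hb uL uR =
     (1/2) *\<^sub>R (Bmat g r hb uL *v (zaux hb uR - zaux hb uL)) + fstar qb uL uR - flux qb uL"

definition Dplus :: "real \<Rightarrow> real \<Rightarrow> (real \<Rightarrow> real \<Rightarrow> real) \<Rightarrow> (real \<Rightarrow> real \<Rightarrow> real)
    \<Rightarrow> real^3 \<Rightarrow> real^3 \<Rightarrow> real^3" where
  "Dplus g r qb hb uL uR =
     (1/2) *\<^sub>R (Bmat g r hb uR *v (zaux hb uR - zaux hb uL)) + flux qb uR - fstar qb uL uR"

definition roe_state :: "real^3 \<Rightarrow> real^3 \<Rightarrow> real^3" where
  "roe_state uL uR = (let vt = (sqrt (uL$1) * vel uL + sqrt (uR$1) * vel uR)
                               / (sqrt (uL$1) + sqrt (uR$1))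
     in vector [avg (uL$1) (uR$1), avg (uL$1) (uR$1) * vt, avg (uL$3) (uR$3)])"

definition is_diag :: "real^3^3 \<Rightarrow> bool" where
  "is_diag M \<longleftrightarrow> (\<forall>i j. i \<noteq> j \<longrightarrow> M$i$j = 0)"

definition mabs :: "real^3^3 \<Rightarrow> real^3^3" where
  "mabs M = (\<chi> i j. \<bar>M$i$j\<bar>)"

definition Qllf :: "real \<Rightarrow> real^3^3" where
  "Qllf lmax = (1/2 * lmax) *\<^sub>R mat 1"

end

theory Submission
  imports Defs
begin

text \<open>At a lake at rest both velocities vanish, so the fluxes, the central flux and \<open>h\<^sub>b\<close>
  vanish; the only surviving part of the fluctuations is the momentum row of \<open>B [[z]]\<close>, which is
  \<open>g h ([[h]] + [[b]]) = 0\<close> by hydrostatic balance. At the Roe state the velocity is zero and the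
  sediment derivatives vanish, so \<open>A\<^sub>r\<^sub>o\<^sub>e\<close> has rows \<open>(0, 1, 0), (gH, 0, gH), (0, 0, 0)\<close>: it has the
  real eigenvalues \<open>\<plusminus>\<surd>(gH), 0\<close> and annihilates the jump \<open>(d, 0, -d)\<close>. A diagonal \<open>\<Lambda>\<close> and
  \<open>|\<Lambda>|\<close> have the same kernel, hence \<open>R |\<Lambda>| R\<^sup>-\<^sup>1\<close> vanishes on the kernel of \<open>R \<Lambda> R\<^sup>-\<^sup>1\<close> for
  every eigendecomposition, which gives \<open>Q\<^sub>r\<^sub>o\<^sub>e [[u]] = 0\<close>.\<close>

lemma invertible_matrix_inv:
  fixes A :: "'a::semiring_1^'n^'m"
  assumes "invertible A"
  shows "A ** matrix_inv A = mat 1" "matrix_inv A ** A = mat 1"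
proof -
  have "\<exists>A'. A ** A' = mat 1 \<and> A' ** A = mat 1"
    using assms by (simp add: invertible_def)
  from someI_ex[OF this] show "A ** matrix_inv A = mat 1" "matrix_inv A ** A = mat 1"
    by (simp_all add: matrix_inv_def)
qed

lemma is_diag_mult_vector_nth:
  assumes "is_diag M"
  shows "(M *v y) $ i = M$i$i * y$i"
  using assms unfolding is_diag_def matrix_vector_mult_def
  by (simp add: sum.remove[of UNIV i])

lemma is_diag_mabs: "is_diag M \<Longrightarrow> is_diag (mabs M)"
  by (simp add: is_diag_def mabs_def)

lemma mabs_mult_vector_eq_0:
  assumes "is_diag L" and "L *v y = 0"
  shows "mabs L *v y = 0"
proof (rule vec_eq_iff[THEN iffD2, rule_format])
  fix i
  have "L$i$i * y$i = 0"
    using assms is_diag_mult_vector_nth[of L y i] by (metis zero_index)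
  then show "(mabs L *v y) $ i = 0 $ i"
    using is_diag_mult_vector_nth[OF is_diag_mabs[OF assms(1)]] by (auto simp: mabs_def)
qed

lemma similar_mabs_mult_vector_eq_0:
  fixes R L :: "real^3^3"
  assumes R: "invertible R" and L: "is_diag L" and "(R ** L ** matrix_inv R) *v x = 0"
  shows "(R ** mabs L ** matrix_inv R) *v x = 0"
proof -
  define y where "y = matrix_inv R *v x"
  have "R *v (L *v y) = 0"
    using assms(3) by (simp add: y_def matrix_vector_mul_assoc matrix_mul_assoc)
  then have "(matrix_inv R ** R) *v (L *v y) = 0"
    by (simp add: matrix_vector_mul_assoc[symmetric])
  then have "L *v y = 0"
    by (simp add: invertible_matrix_inv(2)[OF R])
  then have "mabs L *v y = 0"
    using mabs_mult_vector_eq_0[OF L] by blast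
  then show ?thesis
    by (simp add: y_def matrix_vector_mul_assoc[symmetric])
qed

definition lake_matrix :: "real \<Rightarrow> real^3^3" where
  "lake_matrix a = vector [vector [0, 1, 0], vector [a, 0, a], vector [0, 0, 0]]"

lemma lake_matrix_eigendecomposition:
  assumes "a > 0"
  obtains R \<Lambda> where "invertible R" "is_diag \<Lambda>" "lake_matrix a = R ** \<Lambda> ** matrix_inv R"
proof -
  define c where "c = sqrt a"
  \<comment> \<open>the columns of \<open>R\<close> are eigenvectors for \<open>c\<close>, \<open>-c\<close> and \<open>0\<close>; \<open>S\<close> is its inverse\<close>
  have c: "c > 0" "c * c = a" using assms by (simp_all add: c_def)
  define R :: "real^3^3" where "R = vector [vector [1, 1, 1], vector [c, -c, 0], vector [0, 0, -1]]"
  define S :: "real^3^3" where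
    "S = vector [vector [1/2, 1/(2*c), 1/2], vector [1/2, -1/(2*c), 1/2], vector [0, 0, -1]]"
  define \<Lambda> :: "real^3^3" where "\<Lambda> = vector [vector [c, 0, 0], vector [0, -c, 0], vector [0, 0, 0]]"
  have "R ** S = mat 1" "S ** R = mat 1" using c
    by (simp_all add: R_def S_def matrix_matrix_mult_def sum_3 vec_eq_iff forall_3 mat_def field_simps)
  then have R: "invertible R" by (auto simp: invertible_def)
  have "lake_matrix a ** R = R ** \<Lambda>"
    by (simp add: R_def lake_matrix_def \<Lambda>_def matrix_matrix_mult_def sum_3 vec_eq_iff forall_3 c algebra_simps)
  then have "lake_matrix a = R ** \<Lambda> ** matrix_inv R"
    by (metis matrix_mul_assoc matrix_mul_rid invertible_matrix_inv(1)[OF R])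
  moreover have "is_diag \<Lambda>" by (simp add: is_diag_def \<Lambda>_def forall_3)
  ultimately show thesis using R that by blast
qed

lemma lake_matrix_mult_vector_eq_0: "lake_matrix a *v vector [d, 0, -d] = 0"
  by (simp add: lake_matrix_def vec_eq_iff forall_3 matrix_vector_mult_def sum_3)

definition lake_at_rest :: "real^3 \<Rightarrow> real^3 \<Rightarrow> bool" where
  "lake_at_rest uL uR \<longleftrightarrow>
     uL$1 > 0 \<and> uR$1 > 0 \<and> uL$2 = 0 \<and> uR$2 = 0 \<and> uL$1 + uL$3 = uR$1 + uR$3"

lemma lake_at_rest_jump:
  "lake_at_rest uL uR \<Longrightarrow> uR - uL = vector [uR$1 - uL$1, 0, -(uR$1 - uL$1)]"
  by (simp add: lake_at_rest_def vec_eq_iff forall_3 algebra_simps)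

lemma zaux_jump_lake_at_rest:
  assumes "lake_at_rest uL uR" and "hb (uL$1) 0 = 0" and "hb (uR$1) 0 = 0"
  shows "zaux hb uR - zaux hb uL = vector [uR$1 - uL$1, 0, -(uR$1 - uL$1)]"
  using assms by (simp add: lake_at_rest_def zaux_def vec_eq_iff forall_3 algebra_simps)

lemma flux_at_rest:
  assumes "u$2 = 0" and "qb (u$1) 0 = 0"
  shows "flux qb u = 0"
  using assms by (simp add: flux_def vel_def vec_eq_iff forall_3)

lemma fstar_lake_at_rest:
  assumes "lake_at_rest uL uR" and "qb (uL$1) 0 = 0" and "qb (uR$1) 0 = 0"
  shows "fstar qb uL uR = 0"
  using assms by (simp add: lake_at_rest_def fstar_def avg_def vec_eq_iff forall_3)

lemma Bmat_mult_hydrostatic_jump: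
  assumes "hb (u$1) (u$2) = 0"
  shows "Bmat g r hb u *v vector [d, 0, -d] = 0"
  using assms by (simp add: Bmat_def vec_eq_iff forall_3 matrix_vector_mult_def sum_3)

lemma Dminus_lake_at_rest:
  assumes rest: "lake_at_rest uL uR"
    and qb: "qb (uL$1) 0 = 0" "qb (uR$1) 0 = 0" and hb: "hb (uL$1) 0 = 0" "hb (uR$1) 0 = 0"
  shows "Dminus g r qb hb uL uR = 0"
proof -
  have m: "uL$2 = 0" using rest by (simp add: lake_at_rest_def)
  have "Bmat g r hb uL *v (zaux hb uR - zaux hb uL) = 0"
    unfolding zaux_jump_lake_at_rest[where hb = hb, OF rest hb]
    by (rule Bmat_mult_hydrostatic_jump) (simp add: m hb)
  then show ?thesis
    by (simp add: Dminus_def fstar_lake_at_rest[where qb = qb, OF rest qb] flux_at_rest m qb)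
qed

lemma Dplus_lake_at_rest:
  assumes rest: "lake_at_rest uL uR"
    and qb: "qb (uL$1) 0 = 0" "qb (uR$1) 0 = 0" and hb: "hb (uL$1) 0 = 0" "hb (uR$1) 0 = 0"
  shows "Dplus g r qb hb uL uR = 0"
proof -
  have m: "uR$2 = 0" using rest by (simp add: lake_at_rest_def)
  have "Bmat g r hb uR *v (zaux hb uR - zaux hb uL) = 0"
    unfolding zaux_jump_lake_at_rest[where hb = hb, OF rest hb]
    by (rule Bmat_mult_hydrostatic_jump) (simp add: m hb)
  then show ?thesis
    by (simp add: Dplus_def fstar_lake_at_rest[where qb = qb, OF rest qb] flux_at_rest m qb)
qed

lemma roe_state_lake_at_rest:
  "lake_at_rest uL uR \<Longrightarrow> roe_state uL uR = vector [avg (uL$1) (uR$1), 0, avg (uL$3) (uR$3)]"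
  by (simp add: lake_at_rest_def roe_state_def vel_def Let_def)

lemma Amat_roe_lake_at_rest:
  assumes "lake_at_rest uL uR" and "H = avg (uL$1) (uR$1)"
    and "hb H 0 = 0" and "dh qb H 0 = 0" and "dm qb H 0 = 0"
  shows "Amat g r qb hb (roe_state uL uR) = lake_matrix (g * H)"
  using assms by (simp add: roe_state_lake_at_rest Amat_def lake_matrix_def vel_def Let_def)

theorem mainTheorem11:
  fixes g r :: real and qb hb :: "real \<Rightarrow> real \<Rightarrow> real" and uL uR :: "real^3"
  assumes g: "g > 0" and r: "r > 0"
    and C1q: "C1_state qb" and C1h: "C1_state hb"
    and qb_vhb: "\<And>h m. h > 0 \<Longrightarrow> qb h m = (m / h) * hb h m"
    and qb0: "\<And>h. h > 0 \<Longrightarrow> qb h 0 = 0"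
    and hb0: "\<And>h. h > 0 \<Longrightarrow> hb h 0 = 0"
    and dqh0: "\<And>h. h > 0 \<Longrightarrow> dh qb h 0 = 0"
    and dqm0: "\<And>h. h > 0 \<Longrightarrow> dm qb h 0 = 0"
    and hL: "uL$1 > 0" and hR: "uR$1 > 0"
    and mL: "uL$2 = 0" and mR: "uR$2 = 0"
    and lake: "uL$1 + uL$3 = uR$1 + uR$3"
  shows "(\<exists>R \<Lambda>. invertible R \<and> is_diag \<Lambda> \<and>
            Amat g r qb hb (roe_state uL uR) = R ** \<Lambda> ** matrix_inv R)
       \<and> Dminus g r qb hb uL uR = 0
       \<and> Dplus g r qb hb uL uR = 0
       \<and> (\<forall>R \<Lambda>. invertible R \<and> is_diag \<Lambda> \<and>
            Amat g r qb hb (roe_state uL uR) = R ** \<Lambda> ** matrix_inv R \<longrightarrow>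
            (let Qroe = (1/2) *\<^sub>R (R ** mabs \<Lambda> ** matrix_inv R) in
               Qroe *v (uR - uL) = 0
             \<and> (wvar g r uR - wvar g r uL) \<bullet> (Qroe *v (uR - uL)) = 0
             \<and> (\<forall>lmax::real. lmax \<ge> 0 \<longrightarrow>
                  (let Q = (0::real) *\<^sub>R Qllf lmax + (1 - 0) *\<^sub>R Qroe in
                    Dplus g r qb hb uL uR + Q *v (uR - uL) = 0
                  \<and> Dminus g r qb hb uL uR - Q *v (uR - uL) = 0))))"
proof -
  define H where "H = avg (uL$1) (uR$1)"
  have "H > 0" using hL hR by (simp add: H_def avg_def)
  have rest: "lake_at_rest uL uR"
    using hL hR mL mR lake by (simp add: lake_at_rest_def)
  have roe: "Amat g r qb hb (roe_state uL uR) = lake_matrix (g * H)"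
    by (rule Amat_roe_lake_at_rest[where qb = qb and hb = hb, OF rest H_def hb0 dqh0 dqm0]) (fact \<open>H > 0\<close>)+
  have diagonalizable: "\<exists>R \<Lambda>. invertible R \<and> is_diag \<Lambda> \<and>
      Amat g r qb hb (roe_state uL uR) = R ** \<Lambda> ** matrix_inv R"
    using lake_matrix_eigendecomposition[of "g * H"] g \<open>H > 0\<close> unfolding roe by (metis mult_pos_pos)
  have Qroe_jump: "((1/2) *\<^sub>R (R ** mabs \<Lambda> ** matrix_inv R)) *v (uR - uL) = 0"
    if "invertible R" "is_diag \<Lambda>" "Amat g r qb hb (roe_state uL uR) = R ** \<Lambda> ** matrix_inv R"
    for R \<Lambda> :: "real^3^3"
  proof -
    have "(R ** \<Lambda> ** matrix_inv R) *v (uR - uL) = 0"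
      unfolding that(3)[symmetric] roe lake_at_rest_jump[OF rest]
      by (rule lake_matrix_mult_vector_eq_0)
    then show ?thesis
      using similar_mabs_mult_vector_eq_0[OF that(1,2)]
      by (simp add: scaleR_matrix_vector_assoc[symmetric])
  qed
  have "Dminus g r qb hb uL uR = 0" "Dplus g r qb hb uL uR = 0"
    by (intro Dminus_lake_at_rest Dplus_lake_at_rest rest qb0 hb0 hL hR)+
  then show ?thesis
    using diagonalizable Qroe_jump by (simp add: Let_def)
qed

end
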